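(* Let $n\ge 1$, $k\ge 1$ be integers, let $\lambda\in\mathbb{F}_{2^n}^*$, and let $f:\mathbb{F}_{2^n}\to\mathbb{F}_2$ be given by $f(x)=Tr(\lambda x^{2^k+1})$. Then $f$ is negabent if and only if $$\lambda^{2^{n-k}}a^{2^{n-k}}+\lambda a^{2^k}+a\neq 0\quad\text{for all } a\in\mathbb{F}_{2^n}^*.$$
   Context: $Tr=Tr_1^n:\mathbb{F}_{2^n}\to\mathbb{F}_2$ is the absolute trace, $Tr(x)=x+x^2+\dots+x^{2^{n-1}}$. Fix a self-dual basis $\{\alpha_1,\dots,\alpha_n\}$ of $\mathbb{F}_{2^n}$ over $\mathbb{F}_2$ (i.e. $Tr(\alpha_i\alpha_j)=\delta_{ij}$) and identify $x=\sum x_i\alpha_i$ with $(x_1,\dots,x_n)\in\mathbb{F}_2^n$, so that $Tr(xy)=\sum_i x_iy_i$; let $wt(x)$ be the number of nonzero coordinates $x_i$. For $f:\mathbb{F}_{2^n}\to\mathbb{F}_2$ the nega-Hadamard transform is $\mathcal{N}_f(\mu)=2^{-n/2}\sum_{x\in\mathbb{F}_{2^n}}(-1)^{f(x)+Tr(\mu x)}\,\mathrm{i}^{wt(x)}$ with $\mathrm{i}=\sqrt{-1}$, and $f$ is called negabent if $|\mathcal{N}_f(\mu)|=1$ for all $\mu\in\mathbb{F}_{2^n}$. *)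

theory Defs
  imports Complex_Main
begin

text \<open>Absolute trace of F_{2^n} over F_2, with values in the prime subfield {0,1}.\<close>
definition Tr :: "nat \<Rightarrow> 'a::field \<Rightarrow> 'a" where
  "Tr n x = (\<Sum>i<n. x ^ (2 ^ i))"

definition self_dual_basis :: "nat \<Rightarrow> (nat \<Rightarrow> 'a::field) \<Rightarrow> bool" where
  "self_dual_basis n \<alpha> \<longleftrightarrow>
     (\<forall>i<n. \<forall>j<n. Tr n (\<alpha> i * \<alpha> j) = (if i = j then 1 else 0))"

definition coords :: "nat \<Rightarrow> (nat \<Rightarrow> 'a::field) \<Rightarrow> 'a \<Rightarrow> nat \<Rightarrow> 'a" where
  "coords n \<alpha> x = (THE c. (\<forall>i<n. c i \<in> {0, 1}) \<and> (\<forall>i. n \<le> i \<longrightarrow> c i = 0)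
                          \<and> x = (\<Sum>i<n. c i * \<alpha> i))"

definition wt :: "nat \<Rightarrow> (nat \<Rightarrow> 'a::field) \<Rightarrow> 'a \<Rightarrow> nat" where
  "wt n \<alpha> x = card {i. i < n \<and> coords n \<alpha> x i \<noteq> 0}"

definition sgn2 :: "'a::field \<Rightarrow> complex" where
  "sgn2 b = (if b = 0 then 1 else -1)"

text \<open>Nega-Hadamard transform of f : F_{2^n} -> F_2 (F_2 = {0,1} inside the field).\<close>
definition nega_hadamard :: "nat \<Rightarrow> (nat \<Rightarrow> 'a::{field,finite}) \<Rightarrow> ('a \<Rightarrow> 'a) \<Rightarrow> 'a \<Rightarrow> complex" where
  "nega_hadamard n \<alpha> f \<mu> =
     (1 / sqrt (2 ^ n)) * (\<Sum>x\<in>UNIV. sgn2 (f x + Tr n (\<mu> * x)) * \<i> ^ wt n \<alpha> x)"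

definition negabent :: "nat \<Rightarrow> (nat \<Rightarrow> 'a::{field,finite}) \<Rightarrow> ('a \<Rightarrow> 'a) \<Rightarrow> bool" where
  "negabent n \<alpha> f \<longleftrightarrow> (\<forall>\<mu>. cmod (nega_hadamard n \<alpha> f \<mu>) = 1)"

end

theory Submission
  imports Defs
begin

(*
  f is a quadratic form: f (x + z) = f x + f z + Tr (x * L z) with
  L z = lam^(2^(n-k)) z^(2^(n-k)) + lam z^(2^k), the first term coming from Tr y = Tr (y^(2^(n-k))).
  In coordinates for a self-dual basis Tr (x * z) is the dot product, and coordinatewise
  i^(wt x) * conj (i^(wt (x + z))) = (-i)^(wt z) * (-1)^Tr (x * z).
  Expanding |N_f mu|^2 as a double sum over x and x + z and summing out x by orthogonality of
  the additive characters leaves a character sum over the kernel K of z |-> L z + z, whose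
  coefficients are nonzero. For K = {0} it is identically 1; conversely, if it is 1 for every mu,
  Fourier inversion shows that K contains nothing but 0.
*)

lemma frobenius_add:
  fixes x y :: "'a::comm_ring_1"
  assumes "(2::'a) = 0"
  shows "(x + y) ^ (2 ^ j) = x ^ (2 ^ j) + y ^ (2 ^ j)"
proof (induction j)
  case (Suc j)
  have "(x + y) ^ (2 ^ Suc j) = ((x + y) ^ (2 ^ j)) ^ 2"
    by (simp add: power_mult[symmetric] mult.commute)
  also have "\<dots> = (x ^ (2 ^ j)) ^ 2 + (y ^ (2 ^ j)) ^ 2"
    by (simp add: Suc power2_sum assms)
  finally show ?case
    by (simp add: power_mult[symmetric] mult.commute)
qed simp

lemma frobenius_sum:
  fixes y :: "'b \<Rightarrow> 'a::comm_ring_1"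
  assumes "(2::'a) = 0" and "finite A"
  shows "(\<Sum>i\<in>A. y i) ^ (2 ^ j) = (\<Sum>i\<in>A. y i ^ (2 ^ j))"
  using assms(2) by (induction A rule: finite_induct) (simp_all add: frobenius_add[OF assms(1)] power_0_left)

lemma finite_field_pow_card_minus_one:
  fixes x :: "'a::{field,finite}"
  assumes "x \<noteq> 0"
  shows "x ^ (card (UNIV :: 'a set) - 1) = 1"
proof -
  let ?U = "UNIV - {0::'a}"
  have "(\<Prod>y\<in>?U. x * y) = (\<Prod>y\<in>?U. y)"
    by (rule prod.reindex_bij_witness[where i = "\<lambda>y. y / x" and j = "(*) x"]) (use assms in auto)
  moreover have "(\<Prod>y\<in>?U. x * y) = x ^ card ?U * (\<Prod>y\<in>?U. y)"
    by (simp add: prod.distrib)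
  moreover have "(\<Prod>y\<in>?U. y) \<noteq> 0" by simp
  moreover have "card ?U = card (UNIV :: 'a set) - 1" by (simp add: card_Diff_singleton)
  ultimately show ?thesis by (metis mult_cancel_right2)
qed

lemma finite_field_pow_card:
  fixes x :: "'a::{field,finite}"
  shows "x ^ card (UNIV :: 'a set) = x"
proof (cases "x = 0")
  case False
  have "card (UNIV :: 'a set) = Suc (card (UNIV :: 'a set) - 1)"
    using finite_UNIV_card_ge_0[where 'a = 'a] by simp
  then show ?thesis
    using finite_field_pow_card_minus_one[OF False] by (metis power_Suc mult_1_right)
qed (simp add: finite_UNIV_card_ge_0)

lemma finite_field_card_ge_two: "2 \<le> card (UNIV :: 'a::{field,finite} set)"
proof -
  have "card {0, 1::'a} \<le> card (UNIV :: 'a set)" by (rule card_mono) simp_all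
  then show ?thesis by simp
qed

lemma finite_field_two_eq_zero:
  assumes "card (UNIV :: 'a::{field,finite} set) = 2 ^ n"
  shows "(2::'a) = 0"
proof -
  have "n \<noteq> 0" using finite_field_card_ge_two[where 'a = 'a] assms by (auto intro: Nat.gr0I)
  then have "odd (card (UNIV :: 'a set) - 1)" using assms by simp
  moreover have "(-1::'a) ^ (card (UNIV :: 'a set) - 1) = 1"
    by (rule finite_field_pow_card_minus_one) simp
  ultimately have "(-1::'a) = 1" by simp
  then show ?thesis by (metis one_add_one add_eq_0_iff)
qed

lemma mult_mem_01: "(a::'a::semiring_1) \<in> {0, 1} \<Longrightarrow> b \<in> {0, 1} \<Longrightarrow> a * b \<in> {0, 1}"
  by auto

lemma sgn2_mult_self: "sgn2 a * sgn2 a = 1"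
  by (simp add: sgn2_def)

lemma power_card_filter_lessThan:
  fixes w :: "'a::comm_monoid_mult" and m :: nat
  shows "w ^ card {j. j < m \<and> P j} = (\<Prod>j<m. if P j then w else 1)"
  by (simp add: prod.If_cases Int_def)

lemma sum_mult_cnj_sum_shift:
  fixes A :: "'a::{ab_group_add,finite} \<Rightarrow> complex"
  shows "(\<Sum>x\<in>UNIV. A x) * cnj (\<Sum>y\<in>UNIV. A y) = (\<Sum>z\<in>UNIV. \<Sum>x\<in>UNIV. A x * cnj (A (x + z)))"
proof -
  have "(\<Sum>x\<in>UNIV. A x) * cnj (\<Sum>y\<in>UNIV. A y) = (\<Sum>x\<in>UNIV. \<Sum>y\<in>UNIV. A x * cnj (A y))"
    by (simp add: cnj_sum sum_product)
  also have "\<dots> = (\<Sum>x\<in>UNIV. \<Sum>z\<in>UNIV. A x * cnj (A (x + z)))"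
  proof (rule sum.cong[OF refl])
    show "(\<Sum>y\<in>UNIV. A x * cnj (A y)) = (\<Sum>z\<in>UNIV. A x * cnj (A (x + z)))" for x
      by (rule sum.reindex_bij_witness[where i = "\<lambda>z. x + z" and j = "\<lambda>y. y - x"]) simp_all
  qed
  also have "\<dots> = (\<Sum>z\<in>UNIV. \<Sum>x\<in>UNIV. A x * cnj (A (x + z)))"
    by (rule sum.swap)
  finally show ?thesis .
qed

locale self_dual_field =
  fixes n :: nat and \<alpha> :: "nat \<Rightarrow> 'a::{field,finite}"
  assumes card_UNIV: "card (UNIV :: 'a set) = 2 ^ n"
    and self_dual: "self_dual_basis n \<alpha>"
begin

lemma two_eq_zero: "(2::'a) = 0"
  using finite_field_two_eq_zero[OF card_UNIV] .

lemma n_pos: "0 < n"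
  using finite_field_card_ge_two[where 'a = 'a] card_UNIV by (auto intro: Nat.gr0I)

lemma add_self [simp]: "(x::'a) + x = 0"
  by (metis mult_2 two_eq_zero mult_zero_left)

lemma add_eq_0_iff_eq: "(x::'a) + y = 0 \<longleftrightarrow> x = y"
  by (metis add_self add_right_cancel)

lemma pow_two_pow_dvd:
  assumes "n dvd j"
  shows "(x::'a) ^ (2 ^ j) = x"
proof -
  obtain m where "j = n * m" using assms by blast
  moreover have "x ^ (2 ^ (n * m)) = x"
  proof (induction m)
    case (Suc m)
    have "x ^ (2 ^ (n * Suc m)) = (x ^ (2 ^ n)) ^ (2 ^ (n * m))"
      by (simp add: power_add power_mult)
    also have "x ^ (2 ^ n) = x"
      using finite_field_pow_card[of x] card_UNIV by simp
    finally show ?case using Suc by simp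
  qed simp
  ultimately show ?thesis by simp
qed

lemma Tr_zero [simp]: "Tr n (0::'a) = 0"
  by (simp add: Tr_def power_0_left)

lemma Tr_add: "Tr n ((x::'a) + y) = Tr n x + Tr n y"
  by (simp add: Tr_def frobenius_add[OF two_eq_zero] sum.distrib)

lemma Tr_sum: "finite A \<Longrightarrow> Tr n (\<Sum>i\<in>A. (y i::'a)) = (\<Sum>i\<in>A. Tr n (y i))"
  by (induction A rule: finite_induct) (simp_all add: Tr_add)

lemma Tr_square: "Tr n ((x::'a) ^ 2) = Tr n x"
proof -
  have "(\<Sum>i<n. x ^ 2 ^ Suc i) + x = (\<Sum>i<Suc n. x ^ 2 ^ i)"
    using sum.lessThan_Suc_shift[of "\<lambda>i. x ^ 2 ^ i" n] by (simp add: add.commute)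
  also have "\<dots> = (\<Sum>i<n. x ^ 2 ^ i) + x"
    by (simp add: pow_two_pow_dvd)
  finally have "(\<Sum>i<n. x ^ 2 ^ Suc i) = (\<Sum>i<n. x ^ 2 ^ i)" by simp
  then show ?thesis
    by (simp add: Tr_def power_mult[symmetric] mult.commute)
qed

lemma Tr_pow_two_pow: "Tr n ((x::'a) ^ (2 ^ j)) = Tr n x"
proof (induction j)
  case (Suc j)
  have "x ^ (2 ^ Suc j) = (x ^ (2 ^ j)) ^ 2"
    by (simp add: power_mult[symmetric] mult.commute)
  then show ?case using Suc by (simp add: Tr_square)
qed simp

lemma Tr_in_01: "Tr n (x::'a) \<in> {0, 1}"
proof -
  have "(Tr n x) ^ 2 = (\<Sum>i<n. (x ^ 2 ^ i) ^ 2)"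
    unfolding Tr_def using frobenius_sum[OF two_eq_zero finite_lessThan, where j = 1] by simp
  also have "\<dots> = Tr n (x ^ 2)"
    by (simp add: Tr_def power_mult[symmetric] mult.commute)
  finally have "(Tr n x) ^ 2 = Tr n (x ^ 2)" .
  then have "Tr n x * Tr n x = Tr n x * 1" by (simp add: Tr_square flip: power2_eq_square)
  then show ?thesis by (metis mult_left_cancel insert_iff)
qed

lemma Tr_mult_01: "c \<in> {0, 1} \<Longrightarrow> Tr n (c * (y::'a)) = c * Tr n y"
  by auto

lemma sgn2_add: "(a::'a) \<in> {0, 1} \<Longrightarrow> b \<in> {0, 1} \<Longrightarrow> sgn2 (a + b) = sgn2 a * sgn2 b"
  by (auto simp: sgn2_def)

lemma sgn2_Tr_add: "sgn2 (Tr n ((x::'a) + y)) = sgn2 (Tr n x) * sgn2 (Tr n y)"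
  unfolding Tr_add by (rule sgn2_add[OF Tr_in_01 Tr_in_01])

lemma sgn2_sum:
  assumes "finite A" and "\<And>i. i \<in> A \<Longrightarrow> (t i::'a) \<in> {0, 1}"
  shows "sgn2 (\<Sum>i\<in>A. t i) = (\<Prod>i\<in>A. sgn2 (t i))"
proof -
  have "(\<Sum>i\<in>A. t i) \<in> {0, 1} \<and> sgn2 (\<Sum>i\<in>A. t i) = (\<Prod>i\<in>A. sgn2 (t i))"
    using assms
  proof (induction A rule: finite_induct)
    case (insert i A)
    then have ti: "t i \<in> {0, 1}" and sA: "(\<Sum>i\<in>A. t i) \<in> {0, 1}" by simp_all
    then have "t i + (\<Sum>i\<in>A. t i) \<in> {0, 1}" by auto
    moreover have "sgn2 (t i + (\<Sum>i\<in>A. t i)) = sgn2 (t i) * sgn2 (\<Sum>i\<in>A. t i)"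
      by (rule sgn2_add[OF ti sA])
    ultimately show ?case using insert by simp
  qed (simp add: sgn2_def)
  then show ?thesis ..
qed

lemma Tr_basis_mult_combination:
  assumes "\<And>i. i < n \<Longrightarrow> c i \<in> {0, 1}" and "j < n"
  shows "Tr n (\<alpha> j * (\<Sum>i<n. c i * \<alpha> i)) = c j"
proof -
  have "\<alpha> j * (\<Sum>i<n. c i * \<alpha> i) = (\<Sum>i<n. c i * (\<alpha> j * \<alpha> i))"
    by (simp add: sum_distrib_left mult.left_commute)
  then have "Tr n (\<alpha> j * (\<Sum>i<n. c i * \<alpha> i)) = (\<Sum>i<n. Tr n (c i * (\<alpha> j * \<alpha> i)))"
    by (simp add: Tr_sum)
  also have "\<dots> = (\<Sum>i<n. c i * Tr n (\<alpha> j * \<alpha> i))"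
    by (intro sum.cong refl Tr_mult_01 assms(1)) simp
  also have "\<dots> = (\<Sum>i<n. if j = i then c i else 0)"
    using self_dual assms(2) unfolding self_dual_basis_def by (intro sum.cong) auto
  also have "\<dots> = c j" using assms(2) by simp
  finally show ?thesis .
qed

lemma basis_subset_sums_surj: "(\<lambda>S. \<Sum>i<n. of_bool (i \<in> S) * \<alpha> i) ` Pow {..<n} = UNIV"
proof -
  let ?g = "\<lambda>S. \<Sum>i<n. of_bool (i \<in> S) * \<alpha> i"
  have "inj_on ?g (Pow {..<n})"
  proof (rule inj_onI)
    fix S T assume S: "S \<in> Pow {..<n}" and T: "T \<in> Pow {..<n}" and eq: "?g S = ?g T"
    have "j \<in> S \<longleftrightarrow> j \<in> T" if "j < n" for j
    proof -
      have "(of_bool (j \<in> S) :: 'a) = Tr n (\<alpha> j * ?g S)"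
        by (rule Tr_basis_mult_combination[symmetric]) (simp_all add: that)
      also have "\<dots> = of_bool (j \<in> T)"
        unfolding eq by (rule Tr_basis_mult_combination) (simp_all add: that)
      finally have "(of_bool (j \<in> S) :: 'a) = of_bool (j \<in> T)" .
      then show ?thesis by (cases "j \<in> S"; cases "j \<in> T") simp_all
    qed
    then show "S = T" using S T by blast
  qed
  then have "card (?g ` Pow {..<n}) = card (UNIV :: 'a set)"
    by (simp add: card_image card_Pow card_UNIV)
  then show ?thesis by (rule card_subset_eq[OF finite_UNIV subset_UNIV])
qed

lemma basis_expansion: "(x::'a) = (\<Sum>i<n. Tr n (\<alpha> i * x) * \<alpha> i)"
proof -
  obtain S where x: "x = (\<Sum>i<n. of_bool (i \<in> S) * \<alpha> i)"
    using basis_subset_sums_surj[THEN equalityD2, THEN subsetD, OF UNIV_I] by blast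
  have "Tr n (\<alpha> j * x) = of_bool (j \<in> S)" if "j < n" for j
    unfolding x by (rule Tr_basis_mult_combination) (simp_all add: that)
  then have "(\<Sum>i<n. Tr n (\<alpha> i * x) * \<alpha> i) = (\<Sum>i<n. of_bool (i \<in> S) * \<alpha> i)"
    by (intro sum.cong) simp_all
  then show ?thesis using x by simp
qed

lemma coords_eq: "coords n \<alpha> x = (\<lambda>i. if i < n then Tr n (\<alpha> i * x) else 0)"
  unfolding coords_def
proof (rule the_equality)
  have "x = (\<Sum>i<n. Tr n (\<alpha> i * x) * \<alpha> i)" by (rule basis_expansion)
  also have "\<dots> = (\<Sum>i<n. (if i < n then Tr n (\<alpha> i * x) else 0) * \<alpha> i)"
    by (intro sum.cong) simp_all
  finally have expansion: "x = (\<Sum>i<n. (if i < n then Tr n (\<alpha> i * x) else 0) * \<alpha> i)" .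
  show "(\<forall>i<n. (if i < n then Tr n (\<alpha> i * x) else 0) \<in> {0, 1}) \<and>
      (\<forall>i. n \<le> i \<longrightarrow> (if i < n then Tr n (\<alpha> i * x) else 0) = 0) \<and>
      x = (\<Sum>i<n. (if i < n then Tr n (\<alpha> i * x) else 0) * \<alpha> i)"
    using Tr_in_01 expansion by (intro conjI allI impI) simp_all
next
  fix c assume c: "(\<forall>i<n. c i \<in> {0, 1}) \<and> (\<forall>i. n \<le> i \<longrightarrow> c i = 0) \<and> x = (\<Sum>i<n. c i * \<alpha> i)"
  show "c = (\<lambda>i. if i < n then Tr n (\<alpha> i * x) else 0)"
    using c Tr_basis_mult_combination[of c] by (auto intro!: ext simp: not_less)
qed

lemma wt_eq: "wt n \<alpha> x = card {i. i < n \<and> Tr n (\<alpha> i * x) = 1}"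
proof -
  have "{i. i < n \<and> coords n \<alpha> x i \<noteq> 0} = {i. i < n \<and> Tr n (\<alpha> i * x) = 1}"
    unfolding coords_eq using Tr_in_01 by auto
  then show ?thesis unfolding wt_def by simp
qed

lemma Tr_mult_eq_sum_coords: "Tr n (x * z) = (\<Sum>j<n. Tr n (\<alpha> j * x) * Tr n (\<alpha> j * z))"
proof -
  have "x * z = (\<Sum>j<n. Tr n (\<alpha> j * z) * (\<alpha> j * x))"
    by (subst basis_expansion[of z]) (simp add: sum_distrib_left algebra_simps)
  then have "Tr n (x * z) = (\<Sum>j<n. Tr n (Tr n (\<alpha> j * z) * (\<alpha> j * x)))"
    by (simp add: Tr_sum)
  also have "\<dots> = (\<Sum>j<n. Tr n (\<alpha> j * x) * Tr n (\<alpha> j * z))"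
    by (intro sum.cong refl) (subst Tr_mult_01[OF Tr_in_01], rule mult.commute)
  finally show ?thesis .
qed

lemma i_pow_mult_cnj_bit:
  assumes "(a::'a) \<in> {0, 1}" and "b \<in> {0, 1}"
  shows "(if a = 1 then \<i> else 1) * cnj (if a + b = 1 then \<i> else 1)
       = (if b = 1 then -\<i> else 1) * sgn2 (a * b)"
  using assms by (auto simp: sgn2_def)

lemma i_pow_wt_mult_cnj:
  "\<i> ^ wt n \<alpha> x * cnj (\<i> ^ wt n \<alpha> (x + z)) = (-\<i>) ^ wt n \<alpha> z * sgn2 (Tr n (x * z))"
proof -
  let ?a = "\<lambda>j. Tr n (\<alpha> j * x)" and ?b = "\<lambda>j. Tr n (\<alpha> j * z)"
  have "\<i> ^ wt n \<alpha> x * cnj (\<i> ^ wt n \<alpha> (x + z))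
     = (\<Prod>j<n. (if ?a j = 1 then \<i> else 1) * cnj (if ?a j + ?b j = 1 then \<i> else 1))"
    unfolding wt_eq power_card_filter_lessThan distrib_left Tr_add cnj_prod
    by (rule prod.distrib[symmetric])
  also have "\<dots> = (\<Prod>j<n. (if ?b j = 1 then -\<i> else 1) * sgn2 (?a j * ?b j))"
    by (intro prod.cong refl i_pow_mult_cnj_bit Tr_in_01)
  also have "\<dots> = (-\<i>) ^ wt n \<alpha> z * (\<Prod>j<n. sgn2 (?a j * ?b j))"
    unfolding wt_eq power_card_filter_lessThan by (rule prod.distrib)
  also have "(\<Prod>j<n. sgn2 (?a j * ?b j)) = sgn2 (Tr n (x * z))"
    unfolding Tr_mult_eq_sum_coords[of x z]
    by (rule sgn2_sum[symmetric]) (simp, intro mult_mem_01 Tr_in_01)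
  finally show ?thesis .
qed

lemma ex_Tr_mult_eq_one:
  assumes "(w::'a) \<noteq> 0"
  obtains c where "Tr n (c * w) = 1"
proof
  show "Tr n (\<alpha> 0 * \<alpha> 0 / w * w) = 1"
    using self_dual n_pos assms unfolding self_dual_basis_def by auto
qed

lemma sum_sgn2_Tr_mult: "(\<Sum>x\<in>UNIV. sgn2 (Tr n (x * (w::'a)))) = (if w = 0 then 2 ^ n else 0)"
proof (cases "w = 0")
  case True
  then show ?thesis using card_UNIV by (simp add: sgn2_def)
next
  case False
  then obtain c where c: "Tr n (c * w) = 1" by (rule ex_Tr_mult_eq_one)
  let ?S = "\<Sum>x\<in>UNIV. sgn2 (Tr n (x * w))"
  have "?S = (\<Sum>x\<in>UNIV. sgn2 (Tr n ((x + c) * w)))"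
    by (rule sum.reindex_bij_witness[where i = "\<lambda>x. x + c" and j = "\<lambda>x. x + c"])
      (simp_all add: add.assoc)
  also have "\<dots> = (\<Sum>x\<in>UNIV. - sgn2 (Tr n (x * w)))"
    unfolding distrib_right sgn2_Tr_add c by (simp add: sgn2_def)
  also have "\<dots> = - ?S" by (simp add: sum_negf)
  finally have "?S = 0" by simp
  then show ?thesis using False by simp
qed

lemma sum_sgn2_Tr_coefficient:
  fixes c :: "'a \<Rightarrow> complex"
  assumes "a \<in> K"
  shows "(\<Sum>\<mu>\<in>UNIV. (\<Sum>z\<in>K. c z * sgn2 (Tr n (\<mu> * z))) * sgn2 (Tr n (\<mu> * a))) = 2 ^ n * c a"
proof -
  have "(\<Sum>\<mu>\<in>UNIV. (\<Sum>z\<in>K. c z * sgn2 (Tr n (\<mu> * z))) * sgn2 (Tr n (\<mu> * a)))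
      = (\<Sum>\<mu>\<in>UNIV. \<Sum>z\<in>K. c z * sgn2 (Tr n (\<mu> * (z + a))))"
    by (simp add: sum_distrib_right distrib_left sgn2_Tr_add mult.assoc)
  also have "\<dots> = (\<Sum>z\<in>K. c z * (\<Sum>\<mu>\<in>UNIV. sgn2 (Tr n (\<mu> * (z + a)))))"
    by (subst sum.swap) (simp add: sum_distrib_left)
  also have "\<dots> = (\<Sum>z\<in>K. if z = a then 2 ^ n * c a else 0)"
    by (intro sum.cong refl) (simp add: sum_sgn2_Tr_mult add_eq_0_iff_eq)
  also have "\<dots> = 2 ^ n * c a" using assms by simp
  finally show ?thesis .
qed

lemma Tr_quadratic_polar:
  fixes lam x z :: 'a
  assumes "n dvd k + m"
  shows "Tr n (lam * (x + z) ^ (2 ^ k + 1))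
    = Tr n (lam * x ^ (2 ^ k + 1)) + Tr n (lam * z ^ (2 ^ k + 1))
      + Tr n (x * (lam ^ (2 ^ m) * z ^ (2 ^ m) + lam * z ^ (2 ^ k)))"
proof -
  have "(x + z) ^ (2 ^ k + 1) = (x ^ (2 ^ k) + z ^ (2 ^ k)) * (x + z)"
    by (simp add: frobenius_add[OF two_eq_zero])
  then have expand: "lam * (x + z) ^ (2 ^ k + 1)
      = lam * x ^ (2 ^ k + 1) + lam * z ^ (2 ^ k + 1) + lam * x ^ (2 ^ k) * z + x * (lam * z ^ (2 ^ k))"
    by (simp add: algebra_simps)
  have "Tr n (lam * x ^ (2 ^ k) * z) = Tr n ((lam * x ^ (2 ^ k) * z) ^ (2 ^ m))"
    by (rule Tr_pow_two_pow[symmetric])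
  also have "(lam * x ^ (2 ^ k) * z) ^ (2 ^ m) = x ^ (2 ^ (k + m)) * (lam ^ (2 ^ m) * z ^ (2 ^ m))"
    by (simp add: power_mult_distrib power_add power_mult[symmetric] ac_simps)
  also have "x ^ (2 ^ (k + m)) = x"
    by (rule pow_two_pow_dvd[OF assms])
  finally have twist: "Tr n (lam * x ^ (2 ^ k) * z) = Tr n (x * (lam ^ (2 ^ m) * z ^ (2 ^ m)))" .
  show ?thesis
    unfolding expand by (simp add: Tr_add twist distrib_left add.assoc)
qed

context
  fixes f L :: "'a \<Rightarrow> 'a"
  assumes f_01: "\<And>x. f x \<in> {0, 1}"
    and f_polar: "\<And>x z. f (x + z) = f x + f z + Tr n (x * L z)"
begin

lemma f_zero: "f 0 = 0"
  using f_polar[of 0 0] by simp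

lemma L_zero: "L 0 = 0"
proof (rule ccontr)
  assume "L 0 \<noteq> 0"
  then obtain c where "Tr n (c * L 0) = 1" by (rule ex_Tr_mult_eq_one)
  moreover have "Tr n (c * L 0) = 0"
    using f_polar[of c 0] f_zero by simp
  ultimately show False by simp
qed

lemma sgn2_shift_product:
  "sgn2 (f x + Tr n (\<mu> * x)) * sgn2 (f (x + z) + Tr n (\<mu> * (x + z)))
     = sgn2 (f z + Tr n (\<mu> * z)) * sgn2 (Tr n (x * L z))"
proof -
  define g where "g y = f y + Tr n (\<mu> * y)" for y
  have g_01: "g y \<in> {0, 1}" for y
    using f_01[of y] Tr_in_01[of "\<mu> * y"] unfolding g_def by auto
  have "g (x + z) = (g x + g z) + Tr n (x * L z)"
    unfolding g_def f_polar distrib_left Tr_add by (simp add: ac_simps)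
  moreover have "g x + g z \<in> {0, 1}"
    using g_01[of x] g_01[of z] by auto
  ultimately have "sgn2 (g (x + z)) = sgn2 (g x + g z) * sgn2 (Tr n (x * L z))"
    by (simp only: sgn2_add[OF _ Tr_in_01])
  also have "sgn2 (g x + g z) = sgn2 (g x) * sgn2 (g z)"
    by (rule sgn2_add[OF g_01 g_01])
  finally have "sgn2 (g (x + z)) = sgn2 (g x) * sgn2 (g z) * sgn2 (Tr n (x * L z))" .
  then show ?thesis
    unfolding g_def[symmetric] by (simp add: sgn2_mult_self flip: mult.assoc)
qed

lemma nega_summand_shift_product:
  "(sgn2 (f x + Tr n (\<mu> * x)) * \<i> ^ wt n \<alpha> x)
     * cnj (sgn2 (f (x + z) + Tr n (\<mu> * (x + z))) * \<i> ^ wt n \<alpha> (x + z))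
   = sgn2 (f z) * (-\<i>) ^ wt n \<alpha> z * sgn2 (Tr n (\<mu> * z)) * sgn2 (Tr n (x * (L z + z)))"
proof -
  have "cnj (sgn2 t) = sgn2 t" for t :: 'a by (simp add: sgn2_def)
  then have "(sgn2 (f x + Tr n (\<mu> * x)) * \<i> ^ wt n \<alpha> x)
        * cnj (sgn2 (f (x + z) + Tr n (\<mu> * (x + z))) * \<i> ^ wt n \<alpha> (x + z))
      = (sgn2 (f x + Tr n (\<mu> * x)) * sgn2 (f (x + z) + Tr n (\<mu> * (x + z))))
        * (\<i> ^ wt n \<alpha> x * cnj (\<i> ^ wt n \<alpha> (x + z)))"
    by (simp add: ac_simps)
  also have "\<dots> = sgn2 (f z + Tr n (\<mu> * z)) * sgn2 (Tr n (x * L z))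
        * ((-\<i>) ^ wt n \<alpha> z * sgn2 (Tr n (x * z)))"
    unfolding sgn2_shift_product i_pow_wt_mult_cnj ..
  also have "\<dots> = sgn2 (f z) * (-\<i>) ^ wt n \<alpha> z * sgn2 (Tr n (\<mu> * z)) * sgn2 (Tr n (x * (L z + z)))"
    by (simp add: sgn2_add[OF f_01 Tr_in_01] distrib_left sgn2_Tr_add ac_simps)
  finally show ?thesis .
qed

lemma nega_hadamard_mult_cnj:
  "nega_hadamard n \<alpha> f \<mu> * cnj (nega_hadamard n \<alpha> f \<mu>)
     = (\<Sum>z | L z + z = 0. sgn2 (f z) * (-\<i>) ^ wt n \<alpha> z * sgn2 (Tr n (\<mu> * z)))"
proof -
  define A where "A x = sgn2 (f x + Tr n (\<mu> * x)) * \<i> ^ wt n \<alpha> x" for x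
  define c where "c z = sgn2 (f z) * (-\<i>) ^ wt n \<alpha> z * sgn2 (Tr n (\<mu> * z))" for z
  have scale: "complex_of_real (1 / sqrt (2 ^ n)) * cnj (complex_of_real (1 / sqrt (2 ^ n))) = 1 / 2 ^ n"
    by (simp flip: of_real_mult add: real_sqrt_power[symmetric] del: real_sqrt_power)
  have "nega_hadamard n \<alpha> f \<mu> * cnj (nega_hadamard n \<alpha> f \<mu>)
      = 1 / 2 ^ n * ((\<Sum>x\<in>UNIV. A x) * cnj (\<Sum>x\<in>UNIV. A x))"
    unfolding nega_hadamard_def A_def complex_cnj_mult scale[symmetric] by (simp only: ac_simps)
  also have "\<dots> = 1 / 2 ^ n * (\<Sum>z\<in>UNIV. \<Sum>x\<in>UNIV. c z * sgn2 (Tr n (x * (L z + z))))"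
    unfolding sum_mult_cnj_sum_shift A_def c_def nega_summand_shift_product ..
  also have "\<dots> = 1 / 2 ^ n * (\<Sum>z\<in>UNIV. c z * (if L z + z = 0 then 2 ^ n else 0))"
    by (simp add: sum_distrib_left[symmetric] sum_sgn2_Tr_mult)
  also have "\<dots> = (\<Sum>z | L z + z = 0. c z)"
    by (simp add: if_distrib sum.If_cases sum_distrib_left)
  finally show ?thesis unfolding c_def .
qed

lemma cmod_nega_hadamard_eq_1_iff:
  "cmod (nega_hadamard n \<alpha> f \<mu>) = 1 \<longleftrightarrow>
     (\<Sum>z | L z + z = 0. sgn2 (f z) * (-\<i>) ^ wt n \<alpha> z * sgn2 (Tr n (\<mu> * z))) = 1"
proof -
  let ?N = "nega_hadamard n \<alpha> f \<mu>"
  have "complex_of_real ((cmod ?N)\<^sup>2) = ?N * cnj ?N"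
    by (rule complex_norm_square)
  then have "(cmod ?N)\<^sup>2 = 1 \<longleftrightarrow> ?N * cnj ?N = 1"
    using of_real_eq_1_iff by metis
  moreover have "cmod ?N = 1 \<longleftrightarrow> (cmod ?N)\<^sup>2 = 1"
    using power2_eq_iff_nonneg[OF norm_ge_zero[of ?N] zero_le_one] by simp
  ultimately show ?thesis unfolding nega_hadamard_mult_cnj by blast
qed

lemma negabent_iff_kernel_trivial: "negabent n \<alpha> f \<longleftrightarrow> (\<forall>z. L z + z = 0 \<longrightarrow> z = 0)"
proof -
  define K where "K = {z. L z + z = 0}"
  define c where "c z = sgn2 (f z) * (-\<i>) ^ wt n \<alpha> z" for z
  define T where "T \<mu> = (\<Sum>z\<in>K. c z * sgn2 (Tr n (\<mu> * z)))" for \<mu>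
  have "0 \<in> K" by (simp add: K_def L_zero)
  have "negabent n \<alpha> f \<longleftrightarrow> (\<forall>\<mu>. T \<mu> = 1)"
    unfolding negabent_def cmod_nega_hadamard_eq_1_iff T_def K_def c_def ..
  also have "\<dots> \<longleftrightarrow> K = {0}"
  proof
    assume T1: "\<forall>\<mu>. T \<mu> = 1"
    have "a = 0" if "a \<in> K" for a
    proof -
      have "2 ^ n * c a = (\<Sum>\<mu>\<in>UNIV. T \<mu> * sgn2 (Tr n (\<mu> * a)))"
        unfolding T_def by (rule sum_sgn2_Tr_coefficient[OF that, symmetric])
      also have "\<dots> = (if a = 0 then 2 ^ n else 0)"
        by (simp add: T1 sum_sgn2_Tr_mult)
      finally show "a = 0" by (auto simp: c_def sgn2_def split: if_splits)
    qed
    then show "K = {0}" using \<open>0 \<in> K\<close> by blast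
  next
    assume "K = {0}"
    moreover have "wt n \<alpha> 0 = 0" by (simp add: wt_eq)
    ultimately show "\<forall>\<mu>. T \<mu> = 1" by (simp add: T_def c_def f_zero sgn2_def)
  qed
  also have "\<dots> \<longleftrightarrow> (\<forall>z. L z + z = 0 \<longrightarrow> z = 0)"
    using \<open>0 \<in> K\<close> unfolding K_def by blast
  finally show ?thesis .
qed

end

end

theorem proposition2:
  fixes lam :: "'a::{field,finite}" and n k :: nat and \<alpha> :: "nat \<Rightarrow> 'a"
  assumes "n \<ge> 1" and "k \<ge> 1" and "card (UNIV :: 'a set) = 2 ^ n"
    and "self_dual_basis n \<alpha>"
    and "lam \<noteq> 0"
  shows "negabent n \<alpha> (\<lambda>x. Tr n (lam * x ^ (2 ^ k + 1))) \<longleftrightarrow>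
         (\<forall>a. a \<noteq> 0 \<longrightarrow>
            lam ^ (2 ^ (n - k mod n)) * a ^ (2 ^ (n - k mod n)) + lam * a ^ (2 ^ k) + a \<noteq> 0)"
  \<comment> \<open>\<open>n \<ge> 1\<close> already follows from the cardinality.\<close>
proof -
  interpret self_dual_field n \<alpha>
    using assms(3,4) by unfold_locales
  define m where "m = n - k mod n"
  have "k + m = n * (k div n) + n"
    using mult_div_mod_eq[of n k] mod_less_divisor[OF n_pos, of k] unfolding m_def by linarith
  then have "n dvd k + m" by simp
  then have "negabent n \<alpha> (\<lambda>x. Tr n (lam * x ^ (2 ^ k + 1))) \<longleftrightarrow>
      (\<forall>z. lam ^ (2 ^ m) * z ^ (2 ^ m) + lam * z ^ (2 ^ k) + z = 0 \<longrightarrow> z = 0)"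
    by (intro negabent_iff_kernel_trivial Tr_in_01 Tr_quadratic_polar)
  then show ?thesis unfolding m_def by blast
qed

end
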